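(* Let $X$ be a finite dimensional Banach space with $n(X)>0$. Then $X$ has the $\mathbf{L}_{p,p}$-nu.
   Context: Let $X$ be a Banach space over $\mathbb{K}\in\{\mathbb{R},\mathbb{C}\}$, $\mathcal{L}(X)$ the bounded linear operators on $X$. $\Pi(X)=\{(x,x^* )\in S_X\times S_{X^*}: x^*(x)=1\}$; $v(T)=\sup\{|x^*(Tx)|:(x,x^* )\in\Pi(X)\}$; $n(X)=\inf\{v(T): T\in\mathcal{L}(X),\ \|T\|=1\}$. $X$ has the $\mathbf{L}_{p,p}$-nu if for every $\varepsilon>0$ and $(x,x^* )\in\Pi(X)$ there is $\eta(\varepsilon,(x,x^* ))>0$ such that whenever $T\in\mathcal{L}(X)$ with $v(T)=1$ satisfies $|x^*(Tx)|>1-\eta(\varepsilon,(x,x^* ))$, there is $S\in\mathcal{L}(X)$ with $v(S)=1$, $|x^*(Sx)|=1$ and $\|S-T\|<\varepsilon$. *)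

theory Defs
  imports "HOL-Analysis.Analysis"
begin

text \<open>A Banach space over a scalar field K (here K is a real normed field, instantiated
  below with real or complex) is modelled on a type 'a of class banach (which carries the
  norm, addition and the underlying real structure) together with an explicit scalar
  multiplication s by elements of K, compatible with the norm and extending scaleR.\<close>

definition K_normed_space :: "('k::real_normed_field \<Rightarrow> 'a::real_normed_vector \<Rightarrow> 'a) \<Rightarrow> bool" where
  "K_normed_space s \<longleftrightarrow> vector_space s
     \<and> (\<forall>c x. norm (s c x) = norm c * norm x)
     \<and> (\<forall>r x. s (of_real r) x = scaleR r x)"

definition K_finite_dimensional :: "('k::real_normed_field \<Rightarrow> 'a::real_normed_vector \<Rightarrow> 'a) \<Rightarrow> bool" where
  "K_finite_dimensional s \<longleftrightarrow> (\<exists>B. finite B \<and> module.span s B = UNIV)"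

definition K_bounded_op :: "('k::real_normed_field \<Rightarrow> 'a::real_normed_vector \<Rightarrow> 'a) \<Rightarrow> ('a \<Rightarrow> 'a) \<Rightarrow> bool" where
  "K_bounded_op s T \<longleftrightarrow> Vector_Spaces.linear s s T \<and> (\<exists>K. \<forall>x. norm (T x) \<le> norm x * K)"

definition K_bounded_functional :: "('k::real_normed_field \<Rightarrow> 'a::real_normed_vector \<Rightarrow> 'a) \<Rightarrow> ('a \<Rightarrow> 'k) \<Rightarrow> bool" where
  "K_bounded_functional s f \<longleftrightarrow> Vector_Spaces.linear s (*) f \<and> (\<exists>K. \<forall>x. norm (f x) \<le> norm x * K)"

definition PiX :: "('k::real_normed_field \<Rightarrow> 'a::real_normed_vector \<Rightarrow> 'a) \<Rightarrow> ('a \<times> ('a \<Rightarrow> 'k)) set" where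
  "PiX s = {(x, f). norm x = 1 \<and> K_bounded_functional s f \<and> onorm f = 1 \<and> f x = 1}"

definition num_radius :: "('k::real_normed_field \<Rightarrow> 'a::real_normed_vector \<Rightarrow> 'a) \<Rightarrow> ('a \<Rightarrow> 'a) \<Rightarrow> real" where
  "num_radius s T = (SUP p\<in>PiX s. norm (snd p (T (fst p))))"

definition num_index :: "('k::real_normed_field \<Rightarrow> 'a::real_normed_vector \<Rightarrow> 'a) \<Rightarrow> real" where
  "num_index s = (INF T\<in>{T. K_bounded_op s T \<and> onorm T = 1}. num_radius s T)"

definition Lpp_nu :: "('k::real_normed_field \<Rightarrow> 'a::real_normed_vector \<Rightarrow> 'a) \<Rightarrow> bool" where
  "Lpp_nu s \<longleftrightarrow> (\<forall>\<epsilon>>0. \<forall>(x, f)\<in>PiX s. \<exists>\<eta>>0. \<forall>T. K_bounded_op s T \<and> num_radius s T = 1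
      \<and> norm (f (T x)) > 1 - \<eta> \<longrightarrow>
      (\<exists>S. K_bounded_op s S \<and> num_radius s S = 1 \<and> norm (f (S x)) = 1
           \<and> onorm (\<lambda>y. S y - T y) < \<epsilon>))"

end

theory Submission
  imports Defs
begin

text \<open>Since \<open>n(X) > 0\<close>, every operator satisfies \<open>n(X) \<parallel>T\<parallel> \<le> v(T)\<close>, so the
  operators with \<open>v(T) = 1\<close> form a bounded set, which is relatively compact in operator
  norm because \<open>X\<close> is finite-dimensional; moreover \<open>v\<close> is 1-Lipschitz for the operator
  norm. If the property failed for some \<open>\<epsilon>\<close> and \<open>(x, x\<^sup>*)\<close>, there would be operators
  \<open>T\<^sub>n\<close> with \<open>v(T\<^sub>n) = 1\<close> and \<open>|x\<^sup>*(T\<^sub>n x)| \<rightarrow> 1\<close>, none of them \<open>\<epsilon>\<close>-close to an operator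
  \<open>S\<close> with \<open>v(S) = 1 = |x\<^sup>*(S x)|\<close>; yet the norm limit of a subsequence is such an \<open>S\<close>.
  A complex space is treated as a real one, spanned by \<open>B \<union> i B\<close> when \<open>B\<close> spans it
  over \<open>\<complex>\<close>.\<close>

section \<open>Compactness in finite-dimensional normed spaces\<close>

lemma abs_mult_infdist_span_le:
  fixes b :: "'a::real_normed_vector"
  assumes "y \<in> span B"
  shows "\<bar>c\<bar> * infdist b (span B) \<le> norm (c *\<^sub>R b + y)"
proof (cases "c = 0")
  case False
  have "- (1 / c) *\<^sub>R y \<in> span B" using assms by (rule span_mul)
  then have "infdist b (span B) \<le> dist b (- (1 / c) *\<^sub>R y)" by (rule infdist_le)
  also have "\<dots> = norm ((1 / c) *\<^sub>R (c *\<^sub>R b + y))"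
    using False by (simp add: dist_norm algebra_simps)
  also have "\<dots> = norm (c *\<^sub>R b + y) / \<bar>c\<bar>" by simp
  finally show ?thesis using False by (simp add: field_simps)
qed simp

lemma closed_if_bounded_seqs_have_convergent_subseqs:
  fixes S :: "'a::real_normed_vector set"
  assumes "\<And>x :: nat \<Rightarrow> 'a. range x \<subseteq> S \<Longrightarrow> bounded (range x) \<Longrightarrow>
             \<exists>r l. strict_mono r \<and> l \<in> S \<and> (x \<circ> r) \<longlonglongrightarrow> l"
  shows "closed S"
  unfolding closed_sequential_limits
proof (intro allI impI, elim conjE)
  fix x l assume x: "\<forall>n. x n \<in> S" and "x \<longlonglongrightarrow> l"
  then have "range x \<subseteq> S" and "bounded (range x)" by (auto intro: convergent_imp_bounded)
  then obtain r l' where "strict_mono r" "l' \<in> S" "(x \<circ> r) \<longlonglongrightarrow> l'" using assms by blast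
  with \<open>x \<longlonglongrightarrow> l\<close> show "l \<in> S" by (metis LIMSEQ_subseq_LIMSEQ LIMSEQ_unique)
qed

lemma convergent_subseq_in_finite_span:
  fixes z :: "nat \<Rightarrow> 'a::real_normed_vector"
  assumes "finite B" and "range z \<subseteq> span B" and "bounded (range z)"
  shows "\<exists>r l. strict_mono r \<and> l \<in> span B \<and> (z \<circ> r) \<longlonglongrightarrow> l"
  using assms
proof (induction B arbitrary: z rule: finite_induct)
  case empty
  then have "z = (\<lambda>n. 0)" by (auto simp: span_empty)
  then show ?case by (intro exI[of _ id] exI[of _ 0]) (auto simp: strict_mono_def span_zero o_def)
next
  case (insert b B)
  show ?case
  proof (cases "b \<in> span B")
    case True
    then show ?thesis using insert by (simp add: span_redundant)
  next
    case False
    have "closed (span B)" using insert.IH by (rule closed_if_bounded_seqs_have_convergent_subseqs)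
    then have d: "infdist b (span B) > 0"
      using False infdist_pos_not_in_closed span_zero by blast
    obtain M where M: "\<And>n. norm (z n) \<le> M"
      using insert.prems(2) by (auto simp: bounded_iff)
    have "\<forall>n. \<exists>k. z n - k *\<^sub>R b \<in> span B"
      using insert.prems(1) span_breakdown_eq by blast
    then obtain c where c: "\<And>n. z n - c n *\<^sub>R b \<in> span B" by metis
    define y where "y n = z n - c n *\<^sub>R b" for n
    \<comment> \<open>the coefficients of \<open>b\<close> stay bounded because \<open>b\<close> has positive distance from \<open>span B\<close>\<close>
    have "\<bar>c n\<bar> * infdist b (span B) \<le> M" for n
      using abs_mult_infdist_span_le[OF c[of n], where c = "c n" and b = b] M[of n] by simp
    then have cM: "\<bar>c n\<bar> \<le> M / infdist b (span B)" for n
      using d by (simp add: field_simps)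
    then obtain c0 r1 where r1: "strict_mono r1" "(c \<circ> r1) \<longlonglongrightarrow> c0"
      using compact_imp_seq_compact[OF compact_cball, of 0 "M / infdist b (span B)"]
      by (metis mem_cball_0 real_norm_def seq_compactE)
    have "norm (y n) \<le> M + M / infdist b (span B) * norm b" for n
      unfolding y_def using M[of n] cM[of n] norm_ge_zero[of b]
      by (smt (verit) mult_right_mono norm_scaleR norm_triangle_ineq4)
    then have "bounded (range (y \<circ> r1))" by (auto simp: bounded_iff)
    moreover have "range (y \<circ> r1) \<subseteq> span B" using c by (auto simp: y_def)
    ultimately obtain r2 y0 where r2: "strict_mono r2" "y0 \<in> span B" "(y \<circ> r1 \<circ> r2) \<longlonglongrightarrow> y0"
      using insert.IH by blast
    have "(\<lambda>n. (c \<circ> r1 \<circ> r2) n *\<^sub>R b + (y \<circ> r1 \<circ> r2) n) \<longlonglongrightarrow> c0 *\<^sub>R b + y0"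
      using LIMSEQ_subseq_LIMSEQ[OF r1(2) r2(1)] r2(3) by (intro tendsto_intros)
    moreover have "(\<lambda>n. (c \<circ> r1 \<circ> r2) n *\<^sub>R b + (y \<circ> r1 \<circ> r2) n) = z \<circ> (r1 \<circ> r2)"
      by (auto simp: y_def)
    moreover have "c0 *\<^sub>R b + y0 \<in> span (insert b B)"
      using r2(2) by (meson span_add span_base span_mul insertI1 span_mono subset_insertI subsetD)
    ultimately show ?thesis using strict_mono_o[OF r1(1) r2(1)] by metis
  qed
qed

lemma compact_cball_finite_span:
  fixes B :: "'a::real_normed_vector set"
  assumes "finite B" and "span B = UNIV"
  shows "compact (cball (0::'a) R)"
  unfolding compact_eq_seq_compact_metric
proof (rule seq_compactI)
  fix z :: "nat \<Rightarrow> 'a" assume z: "\<forall>n. z n \<in> cball 0 R"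
  then have "bounded (range z)" by (auto simp: bounded_iff)
  then obtain r l where r: "strict_mono r" "(z \<circ> r) \<longlonglongrightarrow> l"
    using convergent_subseq_in_finite_span[OF assms(1)] assms(2) by blast
  moreover have "l \<in> cball 0 R"
    using LIMSEQ_le_const2[OF tendsto_norm[OF r(2)]] z by auto
  ultimately show "\<exists>l\<in>cball 0 R. \<exists>r. strict_mono r \<and> (z \<circ> r) \<longlonglongrightarrow> l" by blast
qed

section \<open>Norm-convergent subsequences of operators\<close>

lemma onorm_le_of_unit_ball:
  assumes f: "bounded_linear f" and "0 \<le> b" and unit: "\<And>w. norm w \<le> 1 \<Longrightarrow> norm (f w) \<le> b"
  shows "onorm f \<le> b"
proof (rule onorm_bound[OF \<open>0 \<le> b\<close>])
  fix x
  show "norm (f x) \<le> b * norm x"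
  proof (cases "x = 0")
    case True
    then show ?thesis using f by (simp add: linear_simps)
  next
    case False
    have "norm (f ((1 / norm x) *\<^sub>R x)) \<le> b" using False by (intro unit) simp
    then show ?thesis using False by (simp add: linear_simps(5)[OF f] field_simps)
  qed
qed

lemma bounded_linear_pointwise_limit:
  assumes bl: "\<And>n. bounded_linear (T n)" and M: "\<And>n. onorm (T n) \<le> M"
    and lim: "\<And>x. (\<lambda>n. T n x) \<longlonglongrightarrow> T0 x"
  shows "bounded_linear T0"
proof (rule bounded_linear_intro[where K = M])
  fix x y
  have "(\<lambda>n. T n (x + y)) \<longlonglongrightarrow> T0 x + T0 y"
    using tendsto_add[OF lim[of x] lim[of y]] bl by (simp add: linear_simps)
  then show "T0 (x + y) = T0 x + T0 y" using lim LIMSEQ_unique by blast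
next
  fix c x
  have "(\<lambda>n. T n (c *\<^sub>R x)) \<longlonglongrightarrow> c *\<^sub>R T0 x"
    using tendsto_scaleR[OF tendsto_const lim[of x]] bl by (simp add: linear_simps)
  then show "T0 (c *\<^sub>R x) = c *\<^sub>R T0 x" using lim LIMSEQ_unique by blast
next
  fix x
  have "norm (T n x) \<le> norm x * M" for n
    using onorm[OF bl, of n x] mult_right_mono[OF M[of n] norm_ge_zero[of x]] by (simp add: mult.commute)
  then show "norm (T0 x) \<le> norm x * M"
    using LIMSEQ_le_const2[OF tendsto_norm[OF lim[of x]]] by blast
qed

text \<open>Pointwise convergence of a norm-bounded sequence of operators is uniform on the
  totally bounded unit ball, since the family is equi-Lipschitz.\<close>

lemma onorm_diff_tendsto_zero_if_pointwise:
  fixes T :: "nat \<Rightarrow> 'a::real_normed_vector \<Rightarrow> 'b::real_normed_vector"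
  assumes compact: "compact (cball (0::'a) 1)"
    and bl: "\<And>n. bounded_linear (T n)" and T0: "bounded_linear T0"
    and M: "\<And>n. onorm (T n) \<le> M" and lim: "\<And>x. (\<lambda>n. T n x) \<longlonglongrightarrow> T0 x"
  shows "(\<lambda>n. onorm (\<lambda>y. T0 y - T n y)) \<longlonglongrightarrow> 0"
proof (rule order_tendstoI)
  fix a :: real assume "a < 0"
  then show "eventually (\<lambda>n. a < onorm (\<lambda>y. T0 y - T n y)) sequentially"
    using onorm_pos_le[OF bounded_linear_sub[OF T0 bl]] by (auto intro: always_eventually less_le_trans)
next
  fix \<delta> :: real assume \<delta>_pos: "0 < \<delta>"
  define C where "C = M + onorm T0 + 1"
  have "0 \<le> M" using M[of 0] onorm_pos_le[OF bl] order_trans by blast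
  then have C: "C > 0" unfolding C_def using onorm_pos_le[OF T0] by simp
  have Lipschitz: "norm (T0 v - T n v) \<le> C * norm v" for n v
  proof -
    have "norm (T0 v - T n v) \<le> norm (T0 v) + norm (T n v)" by (rule norm_triangle_ineq4)
    also have "\<dots> \<le> onorm T0 * norm v + M * norm v"
      using onorm[OF T0, of v] onorm[OF bl, of n v] mult_right_mono[OF M[of n] norm_ge_zero[of v]]
      by linarith
    also have "\<dots> \<le> C * norm v" unfolding C_def by (simp add: algebra_simps)
    finally show ?thesis .
  qed
  obtain k where k: "finite k" "cball (0::'a) 1 \<subseteq> (\<Union>y\<in>k. ball y (\<delta> / (4 * C)))"
    using seq_compact_imp_totally_bounded[OF compact_imp_seq_compact[OF compact]] \<delta>_pos C
    by (metis divide_pos_pos mult_pos_pos zero_less_numeral)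
  have "eventually (\<lambda>n. \<forall>y\<in>k. dist (T n y) (T0 y) < \<delta> / 4) sequentially"
    using k(1) \<delta>_pos by (intro eventually_ball_finite ballI tendstoD lim) simp_all
  then have "eventually (\<lambda>n. onorm (\<lambda>y. T0 y - T n y) \<le> \<delta> / 2) sequentially"
  proof eventually_elim
    case (elim n)
    show ?case
    proof (rule onorm_le_of_unit_ball[OF bounded_linear_sub[OF T0 bl]])
      fix w :: 'a assume "norm w \<le> 1"
      with k(2) obtain y where y: "y \<in> k" "dist y w < \<delta> / (4 * C)" by force
      have "T0 w - T n w = (T0 (w - y) - T n (w - y)) + (T0 y - T n y)"
        using linear_simps(2)[OF T0] linear_simps(2)[OF bl] by (simp add: algebra_simps)
      then have "norm (T0 w - T n w) \<le> C * norm (w - y) + norm (T0 y - T n y)"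
        using Lipschitz[where n = n and v = "w - y"] by (metis add_right_mono norm_triangle_ineq order_trans)
      also have "C * norm (w - y) < \<delta> / 4"
        using y(2) C by (simp add: dist_norm norm_minus_commute field_simps)
      also have "norm (T0 y - T n y) < \<delta> / 4"
        using elim y(1) by (simp add: dist_norm norm_minus_commute)
      finally show "norm (T0 w - T n w) \<le> \<delta> / 2" by simp
    qed (use \<delta>_pos in simp)
  qed
  then show "eventually (\<lambda>n. onorm (\<lambda>y. T0 y - T n y) < \<delta>) sequentially"
    by eventually_elim (use \<delta>_pos in simp)
qed

lemma pointwise_convergent_subseq:
  fixes T :: "nat \<Rightarrow> 'a::real_normed_vector \<Rightarrow> 'b::real_normed_vector"
  assumes compact: "\<And>R. compact (cball (0::'b) R)"
    and bl: "\<And>n. bounded_linear (T n)" and M: "\<And>n. onorm (T n) \<le> M"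
    and "finite A"
  shows "\<exists>r. strict_mono r \<and> (\<forall>a\<in>A. convergent (\<lambda>n. T (r n) a))"
  using \<open>finite A\<close>
proof (induction A rule: finite_induct)
  case empty
  show ?case by (intro exI[of _ id]) (simp add: strict_mono_def)
next
  case (insert a A)
  then obtain r where r: "strict_mono r" "\<forall>a\<in>A. convergent (\<lambda>n. T (r n) a)" by blast
  have "T (r n) a \<in> cball 0 (M * norm a)" for n
    using onorm[OF bl, of "r n" a] M[of "r n"] by (simp add: mult_right_mono order_trans)
  then obtain r' l where r': "strict_mono r'" "((\<lambda>n. T (r n) a) \<circ> r') \<longlonglongrightarrow> l"
    using compact_imp_seq_compact[OF compact] by (metis seq_compactE)
  have "convergent (\<lambda>n. T (r (r' n)) a')" if "a' \<in> insert a A" for a'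
  proof (cases "a' = a")
    case True
    then show ?thesis using r'(2) by (auto simp: convergent_def o_def)
  next
    case False
    then have "convergent ((\<lambda>n. T (r n) a') \<circ> r')"
      using that r(2) r'(1) convergent_subseq_convergent by blast
    then show ?thesis by (simp add: o_def)
  qed
  then show ?case using strict_mono_o[OF r(1) r'(1)] by auto
qed

lemma operator_convergent_subseq:
  fixes T :: "nat \<Rightarrow> 'a::real_normed_vector \<Rightarrow> 'b::real_normed_vector"
  assumes A: "finite A" "span A = (UNIV :: 'a set)" and B: "finite B" "span B = (UNIV :: 'b set)"
    and bl: "\<And>n. bounded_linear (T n)" and M: "\<And>n. onorm (T n) \<le> M"
  obtains r T0 where "strict_mono r" "bounded_linear T0" "\<And>x. (\<lambda>n. T (r n) x) \<longlonglongrightarrow> T0 x"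
    "(\<lambda>n. onorm (\<lambda>y. T0 y - T (r n) y)) \<longlonglongrightarrow> 0"
proof -
  obtain r where r: "strict_mono r" "\<forall>a\<in>A. convergent (\<lambda>n. T (r n) a)"
    using pointwise_convergent_subseq[where T = T, OF compact_cball_finite_span[OF B] bl M A(1)] by blast
  have "span A \<subseteq> {x. convergent (\<lambda>n. T (r n) x)}"
  proof (rule span_minimal)
    show "subspace {x. convergent (\<lambda>n. T (r n) x)}"
      using bl by (auto simp: subspace_def linear_simps convergent_def intro!: tendsto_intros)
  qed (use r(2) in auto)
  then have conv: "convergent (\<lambda>n. T (r n) x)" for x
    using A(2) by auto
  define T0 where "T0 x = lim (\<lambda>n. T (r n) x)" for x
  have lim: "(\<lambda>n. T (r n) x) \<longlonglongrightarrow> T0 x" for x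
    unfolding T0_def using conv convergent_LIMSEQ_iff by blast
  have T0: "bounded_linear T0" using bl M lim by (rule bounded_linear_pointwise_limit)
  show ?thesis
    using that[OF r(1) T0 lim]
      onorm_diff_tendsto_zero_if_pointwise[OF compact_cball_finite_span[OF A] bl T0 M lim]
    by blast
qed

section \<open>Numerical radius\<close>

lemma K_normed_spaceD:
  assumes "K_normed_space s"
  shows "vector_space s" and "norm (s c x) = norm c * norm x" and "s (of_real r) x = r *\<^sub>R x"
  using assms unfolding K_normed_space_def by auto

lemma K_normed_space_mult: "K_normed_space ((*) :: 'k::real_normed_field \<Rightarrow> 'k \<Rightarrow> 'k)"
  unfolding K_normed_space_def
  by (simp add: vector_space_over_itself.vector_space_axioms norm_mult scaleR_conv_of_real)

lemma bounded_linear_if_K_linear: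
  assumes s1: "K_normed_space s1" and s2: "K_normed_space s2"
    and lin: "Vector_Spaces.linear s1 s2 f" and bound: "\<exists>K. \<forall>x. norm (f x) \<le> norm x * K"
  shows "bounded_linear f"
proof -
  obtain K where K: "\<And>x. norm (f x) \<le> norm x * K" using bound by blast
  have add: "f (x + y) = f x + f y" and hom: "f (s1 c x) = s2 c (f x)" for x y c
    using lin unfolding Vector_Spaces.linear_iff by auto
  show ?thesis
  proof (rule bounded_linear_intro[OF add _ K])
    fix r x
    show "f (r *\<^sub>R x) = r *\<^sub>R f x"
      using hom[of "of_real r" x] by (simp add: K_normed_spaceD(3)[OF s1] K_normed_spaceD(3)[OF s2])
  qed
qed

lemma K_bounded_op_imp_bounded_linear:
  "K_normed_space s \<Longrightarrow> K_bounded_op s T \<Longrightarrow> bounded_linear T"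
  unfolding K_bounded_op_def by (blast intro: bounded_linear_if_K_linear)

lemma K_bounded_functional_imp_bounded_linear:
  "K_normed_space s \<Longrightarrow> K_bounded_functional s f \<Longrightarrow> bounded_linear f"
  unfolding K_bounded_functional_def by (blast intro: bounded_linear_if_K_linear K_normed_space_mult)

lemma bounded_linear_K_scale:
  assumes "K_normed_space s"
  shows "bounded_linear (s c)"
proof -
  interpret vector_space s by (rule K_normed_spaceD(1)[OF assms])
  show ?thesis
  proof (rule bounded_linear_if_K_linear[OF assms assms])
    show "Vector_Spaces.linear s s (s c)"
      by (simp add: linear_iff vector_space_axioms scale_right_distrib mult.commute)
    show "\<exists>K. \<forall>x. norm (s c x) \<le> norm x * K"
      using K_normed_spaceD(2)[OF assms] by (auto simp: mult.commute)
  qed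
qed

lemma K_bounded_op_scaleR:
  assumes KN: "K_normed_space s" and T: "K_bounded_op s T"
  shows "K_bounded_op s (\<lambda>y. a *\<^sub>R T y)"
proof -
  interpret vector_space s by (rule K_normed_spaceD(1)[OF KN])
  have "T (x + y) = T x + T y" and "T (s c x) = s c (T x)" for x y c
    using T unfolding K_bounded_op_def Vector_Spaces.linear_iff by auto
  moreover have "a *\<^sub>R s c z = s c (a *\<^sub>R z)" for c z
    by (metis K_normed_spaceD(3)[OF KN] mult.commute scale_scale)
  moreover have "\<exists>K. \<forall>x. norm (a *\<^sub>R T x) \<le> norm x * K"
    using bounded_linear.bounded[OF bounded_linear_compose[OF bounded_linear_scaleR_right
          K_bounded_op_imp_bounded_linear[OF KN T]]] by auto
  ultimately show ?thesis
    unfolding K_bounded_op_def Vector_Spaces.linear_iff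
    by (simp add: vector_space_axioms scaleR_add_right)
qed

lemma K_bounded_op_pointwise_limit:
  assumes KN: "K_normed_space s" and T: "\<And>n. K_bounded_op s (T n)"
    and T0: "bounded_linear T0" and lim: "\<And>y. (\<lambda>n. T n y) \<longlonglongrightarrow> T0 y"
  shows "K_bounded_op s T0"
proof -
  have "T0 (s c x) = s c (T0 x)" for c x
  proof -
    have "(\<lambda>n. T n (s c x)) = (\<lambda>n. s c (T n x))"
      using T unfolding K_bounded_op_def Vector_Spaces.linear_iff by auto
    moreover have "(\<lambda>n. s c (T n x)) \<longlonglongrightarrow> s c (T0 x)"
      by (rule bounded_linear.tendsto[OF bounded_linear_K_scale[OF KN] lim])
    ultimately show ?thesis using lim[of "s c x"] LIMSEQ_unique by metis
  qed
  then show ?thesis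
    using K_normed_spaceD(1)[OF KN] bounded_linear.bounded[OF T0] linear_simps(1)[OF T0]
    unfolding K_bounded_op_def Vector_Spaces.linear_iff by blast
qed

lemma PiX_D:
  assumes "K_normed_space s" and "(x, f) \<in> PiX s"
  shows "norm x = 1" and "bounded_linear f" and "onorm f = 1" and "f x = 1"
  using assms K_bounded_functional_imp_bounded_linear unfolding PiX_def by auto

lemma norm_apply_PiX_le_onorm:
  assumes KN: "K_normed_space s" and p: "(x, f) \<in> PiX s" and T: "bounded_linear T"
  shows "norm (f (T x)) \<le> onorm T"
proof -
  have "norm (f (T x)) \<le> onorm f * norm (T x)" by (rule onorm[OF PiX_D(2)[OF KN p]])
  also have "\<dots> \<le> onorm T * norm x" using PiX_D(3)[OF KN p] onorm[OF T] by simp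
  finally show ?thesis using PiX_D(1)[OF KN p] by simp
qed

lemma num_radius_ge:
  assumes KN: "K_normed_space s" and p: "(x, f) \<in> PiX s" and T: "bounded_linear T"
  shows "norm (f (T x)) \<le> num_radius s T"
proof -
  have "bdd_above ((\<lambda>p. norm (snd p (T (fst p)))) ` PiX s)"
    using norm_apply_PiX_le_onorm[OF KN _ T] by (intro bdd_aboveI[where M = "onorm T"]) auto
  then show ?thesis unfolding num_radius_def using cSUP_upper[OF p] by fastforce
qed

lemma num_radius_le:
  assumes "PiX s \<noteq> {}" and "\<And>x f. (x, f) \<in> PiX s \<Longrightarrow> norm (f (T x)) \<le> c"
  shows "num_radius s T \<le> c"
  unfolding num_radius_def using assms by (intro cSUP_least) auto

lemma num_radius_nonneg:
  assumes KN: "K_normed_space s" and "PiX s \<noteq> {}" and T: "bounded_linear T"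
  shows "0 \<le> num_radius s T"
proof -
  obtain x f where "(x, f) \<in> PiX s" using \<open>PiX s \<noteq> {}\<close> by auto
  from num_radius_ge[OF KN this T] show ?thesis by (meson norm_ge_zero order_trans)
qed

lemma num_radius_le_add_onorm_diff:
  assumes KN: "K_normed_space s" and ne: "PiX s \<noteq> {}"
    and T: "bounded_linear T" and S: "bounded_linear S"
  shows "num_radius s T \<le> num_radius s S + onorm (\<lambda>y. T y - S y)"
proof (rule num_radius_le[OF ne])
  fix x f assume p: "(x, f) \<in> PiX s"
  have "f (T x) = f (S x) + f (T x - S x)"
    using linear_simps(1)[OF PiX_D(2)[OF KN p], of "S x" "T x - S x"] by simp
  then have "norm (f (T x)) \<le> norm (f (S x)) + norm (f (T x - S x))" by (metis norm_triangle_ineq)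
  also have "\<dots> \<le> num_radius s S + onorm (\<lambda>y. T y - S y)"
    using num_radius_ge[OF KN p S] norm_apply_PiX_le_onorm[OF KN p bounded_linear_sub[OF T S]]
    by (intro add_mono) auto
  finally show "norm (f (T x)) \<le> num_radius s S + onorm (\<lambda>y. T y - S y)" .
qed

lemma abs_num_radius_diff_le:
  assumes KN: "K_normed_space s" and ne: "PiX s \<noteq> {}"
    and T: "bounded_linear T" and S: "bounded_linear S"
  shows "\<bar>num_radius s T - num_radius s S\<bar> \<le> onorm (\<lambda>y. T y - S y)"
proof -
  have "onorm (\<lambda>y. S y - T y) = onorm (\<lambda>y. T y - S y)"
    using onorm_neg[of "\<lambda>y. T y - S y"] by simp
  then show ?thesis
    using num_radius_le_add_onorm_diff[OF KN ne T S] num_radius_le_add_onorm_diff[OF KN ne S T]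
    by linarith
qed

lemma num_index_mult_onorm_le:
  assumes KN: "K_normed_space s" and ne: "PiX s \<noteq> {}" and T: "K_bounded_op s T"
  shows "num_index s * onorm T \<le> num_radius s T"
proof -
  have Tb: "bounded_linear T" by (rule K_bounded_op_imp_bounded_linear[OF KN T])
  show ?thesis
  proof (cases "onorm T = 0")
    case True
    then show ?thesis using num_radius_nonneg[OF KN ne Tb] by simp
  next
    case False
    define t where "t = onorm T"
    have t: "t > 0" using False onorm_pos_le[OF Tb] unfolding t_def by simp
    define T' where "T' y = (1 / t) *\<^sub>R T y" for y
    have "K_bounded_op s T'" unfolding T'_def by (rule K_bounded_op_scaleR[OF KN T])
    moreover have "onorm T' = 1"
      unfolding T'_def using onorm_scaleR[OF Tb, of "1 / t"] t t_def by simp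
    moreover have "bdd_below (num_radius s ` {T. K_bounded_op s T \<and> onorm T = 1})"
      using num_radius_nonneg[OF KN ne K_bounded_op_imp_bounded_linear[OF KN]]
      by (intro bdd_belowI[where m = 0]) auto
    ultimately have "num_index s \<le> num_radius s T'"
      unfolding num_index_def by (blast intro: cINF_lower)
    also have "num_radius s T' \<le> num_radius s T / t"
    proof (rule num_radius_le[OF ne])
      fix x f assume p: "(x, f) \<in> PiX s"
      have "norm (f (T' x)) = norm (f (T x)) / t"
        unfolding T'_def using linear_simps(5)[OF PiX_D(2)[OF KN p]] t by simp
      also have "\<dots> \<le> num_radius s T / t"
        using num_radius_ge[OF KN p Tb] t by (simp add: divide_right_mono)
      finally show "norm (f (T' x)) \<le> num_radius s T / t" .
    qed
    finally show ?thesis using t unfolding t_def by (simp add: field_simps)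
  qed
qed

lemma tendsto_apply_PiX:
  fixes T :: "nat \<Rightarrow> 'a::real_normed_vector \<Rightarrow> 'a"
  assumes KN: "K_normed_space s" and p: "(x, f) \<in> PiX s"
    and T: "\<And>n. bounded_linear (T n)" and T0: "bounded_linear T0"
    and lim: "(\<lambda>n. onorm (\<lambda>y. T0 y - T n y)) \<longlonglongrightarrow> 0"
  shows "(\<lambda>n. f (T n x)) \<longlonglongrightarrow> f (T0 x)"
proof -
  have "norm (f (T n x) - f (T0 x)) \<le> onorm (\<lambda>y. T0 y - T n y)" for n
  proof -
    have "f (T n x) - f (T0 x) = - f (T0 x - T n x)"
      using linear_simps(2)[OF PiX_D(2)[OF KN p]] by simp
    then show ?thesis 
      using norm_apply_PiX_le_onorm[OF KN p bounded_linear_sub[OF T0 T]] by simp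
  qed
  then have "(\<lambda>n. f (T n x) - f (T0 x)) \<longlonglongrightarrow> 0"
    by (intro Lim_null_comparison[OF always_eventually lim]) blast
  then show ?thesis by (rule LIM_zero_cancel)
qed

lemma num_radius_one_convergent_subseq:
  fixes T :: "nat \<Rightarrow> 'a::real_normed_vector \<Rightarrow> 'a"
  assumes KN: "K_normed_space s" and B: "finite B" "span B = (UNIV :: 'a set)"
    and ne: "PiX s \<noteq> {}" and idx: "num_index s > 0"
    and T: "\<And>n. K_bounded_op s (T n)" and vT: "\<And>n. num_radius s (T n) = 1"
  obtains r T0 where "strict_mono r" "K_bounded_op s T0" "num_radius s T0 = 1"
    "(\<lambda>n. onorm (\<lambda>y. T0 y - T (r n) y)) \<longlonglongrightarrow> 0"
proof -
  have Tb: "bounded_linear (T n)" for n by (rule K_bounded_op_imp_bounded_linear[OF KN T])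
  have "onorm (T n) \<le> 1 / num_index s" for n
    using num_index_mult_onorm_le[OF KN ne T, of n] vT[of n] idx by (simp add: field_simps)
  then obtain r T0 where r: "strict_mono r" and T0: "bounded_linear T0"
    and pointwise: "\<And>y. (\<lambda>n. T (r n) y) \<longlonglongrightarrow> T0 y"
    and lim: "(\<lambda>n. onorm (\<lambda>y. T0 y - T (r n) y)) \<longlonglongrightarrow> 0"
    using operator_convergent_subseq[where T = T, OF B B Tb] by blast
  have "\<bar>num_radius s T0 - 1\<bar> \<le> onorm (\<lambda>y. T0 y - T (r n) y)" for n
    using abs_num_radius_diff_le[OF KN ne T0 Tb[of "r n"]] vT[of "r n"] by simp
  then have "\<bar>num_radius s T0 - 1\<bar> \<le> 0"
    using LIMSEQ_le_const[OF lim] by blast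
  then have "num_radius s T0 = 1" by simp
  with that[OF r K_bounded_op_pointwise_limit[OF KN T T0 pointwise] _ lim] show ?thesis .
qed

lemma LIMSEQ_one_if_within_inverse_Suc:
  fixes a :: "nat \<Rightarrow> real"
  assumes "\<And>n. a n \<le> 1" and "\<And>n. 1 - inverse (real (Suc n)) < a n"
  shows "a \<longlonglongrightarrow> 1"
proof (rule tendsto_sandwich[OF always_eventually always_eventually _ tendsto_const])
  have "(\<lambda>n. 1 - inverse (real (Suc n))) \<longlonglongrightarrow> 1 - 0"
    using LIMSEQ_inverse_real_of_nat by (rule tendsto_diff[OF tendsto_const])
  then show "(\<lambda>n. 1 - inverse (real (Suc n))) \<longlonglongrightarrow> 1" by simp
  show "\<forall>n. 1 - inverse (real (Suc n)) \<le> a n" using assms(2) less_imp_le by blast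
  show "\<forall>n. a n \<le> 1" using assms(1) by blast
qed

lemma Lpp_nu_if_finite_span:
  fixes s :: "'k::real_normed_field \<Rightarrow> 'a::real_normed_vector \<Rightarrow> 'a"
  assumes KN: "K_normed_space s" and B: "finite B" "span B = (UNIV :: 'a set)"
    and idx: "num_index s > 0"
  shows "Lpp_nu s"
  unfolding Lpp_nu_def
proof (intro allI impI ballI, clarify)
  fix \<epsilon> :: real and x f assume \<epsilon>: "\<epsilon> > 0" and p: "(x, f) \<in> PiX s"
  have ne: "PiX s \<noteq> {}" using p by auto
  let ?good = "\<lambda>T. \<exists>S. K_bounded_op s S \<and> num_radius s S = 1 \<and> norm (f (S x)) = 1
                        \<and> onorm (\<lambda>y. S y - T y) < \<epsilon>"
  show "\<exists>\<eta>>0. \<forall>T. K_bounded_op s T \<and> num_radius s T = 1 \<and> 1 - \<eta> < norm (f (T x)) \<longrightarrow> ?good T"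
  proof (rule ccontr)
    assume neg: "\<not> ?thesis"
    have "\<forall>n. \<exists>T. K_bounded_op s T \<and> num_radius s T = 1
                   \<and> 1 - inverse (real (Suc n)) < norm (f (T x)) \<and> \<not> ?good T"
    proof
      fix n :: nat
      have "inverse (real (Suc n)) > 0" by simp
      with neg show "\<exists>T. K_bounded_op s T \<and> num_radius s T = 1
                   \<and> 1 - inverse (real (Suc n)) < norm (f (T x)) \<and> \<not> ?good T"
        by blast
    qed
    then obtain T where "\<forall>n. K_bounded_op s (T n) \<and> num_radius s (T n) = 1
                   \<and> 1 - inverse (real (Suc n)) < norm (f (T n x)) \<and> \<not> ?good (T n)"
      by (rule choice[THEN exE])
    then have T: "\<And>n. K_bounded_op s (T n)" "\<And>n. num_radius s (T n) = 1"
      and close: "\<And>n. 1 - inverse (real (Suc n)) < norm (f (T n x))"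
      and bad: "\<And>n. \<not> ?good (T n)"
      by blast+
    obtain r T0 where r: "strict_mono r" and T0: "K_bounded_op s T0" "num_radius s T0 = 1"
      and lim: "(\<lambda>n. onorm (\<lambda>y. T0 y - T (r n) y)) \<longlonglongrightarrow> 0"
      by (rule num_radius_one_convergent_subseq[OF KN B ne idx T])
    have "(\<lambda>n. f (T (r n) x)) \<longlonglongrightarrow> f (T0 x)"
      by (rule tendsto_apply_PiX[OF KN p K_bounded_op_imp_bounded_linear[OF KN T(1)]
            K_bounded_op_imp_bounded_linear[OF KN T0(1)] lim])
    then have "(\<lambda>n. norm (f (T (r n) x))) \<longlonglongrightarrow> norm (f (T0 x))" by (rule tendsto_norm)
    moreover have "(\<lambda>n. norm (f (T n x))) \<longlonglongrightarrow> 1"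
    proof (rule LIMSEQ_one_if_within_inverse_Suc[OF _ close])
      show "norm (f (T n x)) \<le> 1" for n
        using num_radius_ge[OF KN p K_bounded_op_imp_bounded_linear[OF KN T(1)]] T(2) by simp
    qed
    then have "(\<lambda>n. norm (f (T (r n) x))) \<longlonglongrightarrow> 1"
      using LIMSEQ_subseq_LIMSEQ[OF _ r] by (simp add: o_def)
    ultimately have "norm (f (T0 x)) = 1" by (rule LIMSEQ_unique)
    moreover obtain n where "onorm (\<lambda>y. T0 y - T (r n) y) < \<epsilon>"
      using eventually_happens'[OF sequentially_bot order_tendstoD(2)[OF lim \<epsilon>]] by blast
    ultimately have "?good (T (r n))" using T0 by blast
    with bad show False by blast
  qed
qed

lemma K_normed_space_real_eq_scaleR:
  assumes "K_normed_space (sR :: real \<Rightarrow> 'a::real_normed_vector \<Rightarrow> 'a)"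
  shows "sR = scaleR"
proof (intro ext)
  fix r x
  show "sR r x = r *\<^sub>R x" using K_normed_spaceD(3)[OF assms, of r x] by simp
qed

lemma complex_span_subset_span_Un_ii:
  fixes sC :: "complex \<Rightarrow> 'b::real_normed_vector \<Rightarrow> 'b"
  assumes KN: "K_normed_space sC"
  shows "module.span sC B \<subseteq> span (B \<union> sC \<i> ` B)"
proof -
  interpret vs: vector_space sC by (rule K_normed_spaceD(1)[OF KN])
  let ?S = "span (B \<union> sC \<i> ` B)"
  have of_real: "sC (of_real r) x = r *\<^sub>R x" for r x by (rule K_normed_spaceD(3)[OF KN])
  have B: "sC c b \<in> ?S" if "b \<in> B" for b c
  proof -
    have "c = of_real (Re c) + of_real (Im c) * \<i>" by (simp add: complex_eq_iff)
    then have "sC c b = sC (of_real (Re c)) b + sC (of_real (Im c)) (sC \<i> b)"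
      by (metis vs.scale_left_distrib vs.scale_scale)
    also have "\<dots> = Re c *\<^sub>R b + Im c *\<^sub>R sC \<i> b" by (simp only: of_real)
    finally show ?thesis using that by (simp add: span_add span_mul span_base)
  qed
  have generators: "sC c z \<in> ?S" if "z \<in> B \<union> sC \<i> ` B" for z c
  proof (cases "z \<in> B")
    case False
    with that obtain b where "b \<in> B" "z = sC \<i> b" by auto
    then show ?thesis using B[of b "c * \<i>"] by simp
  qed (rule B)
  have "sC c y \<in> ?S" if "y \<in> ?S" for y c
    using that
  proof (induction arbitrary: c rule: span_induct_alt)
    case (step a x y)
    have "sC c (a *\<^sub>R x + y) = sC (c * of_real a) x + sC c y"
      by (simp only: vs.scale_right_distrib of_real[symmetric] vs.scale_scale)
    then show ?case using generators[OF step(1)] step(2) by (simp add: span_add)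
  qed (simp add: span_zero)
  then have "vs.subspace ?S" by (auto simp: vs.subspace_def span_zero span_add)
  then show ?thesis by (intro vs.span_minimal) (auto intro: span_base)
qed

theorem proposition3p3:
  fixes sR :: "real \<Rightarrow> 'a::banach \<Rightarrow> 'a"
    and sC :: "complex \<Rightarrow> 'b::banach \<Rightarrow> 'b"
  shows "(K_normed_space sR \<and> K_finite_dimensional sR \<and> num_index sR > 0 \<longrightarrow> Lpp_nu sR)
       \<and> (K_normed_space sC \<and> K_finite_dimensional sC \<and> num_index sC > 0 \<longrightarrow> Lpp_nu sC)"
proof (intro conjI impI; elim conjE)
  assume KN: "K_normed_space sR" and "K_finite_dimensional sR" and idx: "num_index sR > 0"
  then obtain B where B: "finite B" "module.span sR B = UNIV"
    unfolding K_finite_dimensional_def by blast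
  have "span B = UNIV"
    using B(2) by (simp add: K_normed_space_real_eq_scaleR[OF KN] span_raw_def)
  then show "Lpp_nu sR" by (rule Lpp_nu_if_finite_span[OF KN B(1) _ idx])
next
  assume KN: "K_normed_space sC" and "K_finite_dimensional sC" and idx: "num_index sC > 0"
  then obtain B where B: "finite B" "module.span sC B = UNIV"
    unfolding K_finite_dimensional_def by blast
  have "finite (B \<union> sC \<i> ` B)" using B(1) by simp
  moreover have "span (B \<union> sC \<i> ` B) = UNIV"
    using complex_span_subset_span_Un_ii[OF KN, of B] B(2) by auto
  ultimately show "Lpp_nu sC" by (rule Lpp_nu_if_finite_span[OF KN _ _ idx])
qed

end
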